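(* Let $\hat K=[0,1]^2$ with centroid $(x_{\hat K},y_{\hat K})=(1/2,1/2)$, let $\kappa>0$, and let $\epsilon$ be a real, strictly positive, smooth function on $\hat K$. Let $n\in\mathbb{N}$ with $n\ge2$, $p=2n+1$ and $q\ge n+1$. Then there is a constant $C$ independent of $\kappa$ (but possibly depending on $p$) such that $$\inf_{v\in GPW_\kappa^{p,q}(\hat K)}\|f-v\|_{L^2(\hat K)}\le C\kappa^2|\epsilon(x_{\hat K},y_{\hat K})|\,\|f\|_{L^2(\hat K)}\quad\text{for all } f\in\mathcal{P}_1(\mathbb{R}^2),$$ where $\mathcal{P}_1(\mathbb{R}^2)$ is the space of real bivariate polynomials of total degree at most 1.
   Context: Notation: $\mathrm{i}=\sqrt{-1}$. Generalized plane waves (GPWs) on a domain $K$ with distinguished point (centroid) $(x_K,y_K)$: for $\kappa>0$, integer $q\ge1$, $\epsilon$ real, strictly positive and $\mathcal{C}^{q-1}$ on $K$, and direction $\theta$, the GPW is $\varphi=e^{P}$ with $P(x,y)=\sum_{0\le i+j\le q+1}\lambda_{i,j}(x-x_K)^i(y-y_K)^j$, where $\lambda_{0,0}=0$; $(\lambda_{1,0},\lambda_{0,1})=\mathrm{i}\kappa\sqrt{\epsilon(x_K,y_K)}(\cos\theta,\sin\theta)$; $\lambda_{i,j}=0$ for $i\in\{0,1\}$, $2\le i+j\le q+1$; and for $0\le i+j\le q-1$, $$\lambda_{i+2,j}=\frac{1}{(i+2)(i+1)}\Big(-\kappa^2\frac{\partial_x^i\partial_y^j\epsilon(x_K,y_K)}{i!\,j!}-(j+2)(j+1)\lambda_{i,j+2}-\sum_{k=0}^{i}\sum_{l=0}^{j}(i-k+1)(k+1)\lambda_{i-k+1,j-l}\lambda_{k+1,l}-\sum_{k=0}^{j}\sum_{l=0}^{i}(j-k+1)(k+1)\lambda_{i-l,j-k+1}\lambda_{l,k+1}\Big).$$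 $GPW_\kappa^{p,q}(K)$ is the (complex) span of the $p$ GPWs with directions $\theta_l=2\pi(l-1)/p$, $l=1,\dots,p$. *)

theory Defs
  imports "HOL-Analysis.Analysis"
begin

definition Khat :: "(real \<times> real) set" where
  "Khat = cbox (0,0) (1,1)"

definition centroid_Khat :: "real \<times> real" where
  "centroid_Khat = (1/2, 1/2)"

text \<open>Smoothness of eps on a set K, witnessed by the family D of all partial
  derivatives: D i j is the partial derivative d_x^i d_y^j of eps, where the
  derivatives are taken within K (one-sided at the boundary) and all of them are continuous.\<close>
definition smooth_family ::
  "(real \<times> real) set \<Rightarrow> (real \<times> real \<Rightarrow> real) \<Rightarrow> (nat \<Rightarrow> nat \<Rightarrow> real \<times> real \<Rightarrow> real) \<Rightarrow> bool" where
  "smooth_family K e D \<longleftrightarrow>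
     (\<forall>z\<in>K. D 0 0 z = e z) \<and>
     (\<forall>i j. continuous_on K (D i j)) \<and>
     (\<forall>i j x y. (x, y) \<in> K \<longrightarrow>
        ((\<lambda>t. D i j (t, y)) has_real_derivative D (Suc i) j (x, y)) (at x within {t. (t, y) \<in> K}) \<and>
        ((\<lambda>t. D i j (x, t)) has_real_derivative D i (Suc j) (x, y)) (at y within {t. (x, t) \<in> K}))"

text \<open>GPW coefficients lambda_{i,j}. Parameters: kappa, the values
  d i j = d_x^i d_y^j eps (x_K,y_K), the direction theta and q.
  Coefficients with i+j > q+1 do not occur in P and are set to 0.\<close>
function gpw_coef :: "real \<Rightarrow> (nat \<Rightarrow> nat \<Rightarrow> real) \<Rightarrow> real \<Rightarrow> nat \<Rightarrow> nat \<Rightarrow> nat \<Rightarrow> complex" where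
  "gpw_coef \<kappa> d \<theta> q 0 j =
     (if j = 1 then \<i> * of_real (\<kappa> * sqrt (d 0 0) * sin \<theta>) else 0)"
| "gpw_coef \<kappa> d \<theta> q (Suc 0) j =
     (if j = 0 then \<i> * of_real (\<kappa> * sqrt (d 0 0) * cos \<theta>) else 0)"
| "gpw_coef \<kappa> d \<theta> q (Suc (Suc i)) j =
     (if i + j + 2 > q + 1 then 0 else
       (1 / of_nat ((i + 2) * (i + 1))) *
        ( - of_real (\<kappa>^2 * d i j / (fact i * fact j))
          - of_nat ((j + 2) * (j + 1)) * gpw_coef \<kappa> d \<theta> q i (j + 2)
          - (\<Sum>k\<in>{0..i}. \<Sum>l\<in>{0..j}. of_nat ((i - k + 1) * (k + 1)) *
               gpw_coef \<kappa> d \<theta> q (i - k + 1) (j - l) * gpw_coef \<kappa> d \<theta> q (k + 1) l)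
          - (\<Sum>k\<in>{0..j}. \<Sum>l\<in>{0..i}. of_nat ((j - k + 1) * (k + 1)) *
               gpw_coef \<kappa> d \<theta> q (i - l) (j - k + 1) * gpw_coef \<kappa> d \<theta> q l (k + 1))))"
  by pat_completeness auto
termination
  by (relation "Wellfounded.measure (\<lambda>(\<kappa>, d, \<theta>, q, i, j). i)") auto

definition gpw :: "real \<Rightarrow> (nat \<Rightarrow> nat \<Rightarrow> real) \<Rightarrow> real \<Rightarrow> nat \<Rightarrow> real \<times> real \<Rightarrow> real \<times> real \<Rightarrow> complex" where
  "gpw \<kappa> d \<theta> q c z =
     exp (\<Sum>(i, j)\<in>{(i, j). i + j \<le> q + 1}.
            gpw_coef \<kappa> d \<theta> q i j * of_real ((fst z - fst c) ^ i * (snd z - snd c) ^ j))"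

definition gpw_space :: "real \<Rightarrow> (nat \<Rightarrow> nat \<Rightarrow> real) \<Rightarrow> nat \<Rightarrow> nat \<Rightarrow> real \<times> real \<Rightarrow> (real \<times> real \<Rightarrow> complex) set" where
  "gpw_space \<kappa> d p q c =
     {v. \<exists>a :: nat \<Rightarrow> complex. v = (\<lambda>z. \<Sum>l\<in>{1..p}.
           a l * gpw \<kappa> d (2 * pi * (real l - 1) / real p) q c z)}"

definition L2_norm :: "(real \<times> real) set \<Rightarrow> (real \<times> real \<Rightarrow> complex) \<Rightarrow> real" where
  "L2_norm K g = sqrt (integral K (\<lambda>z. (cmod (g z))^2))"

definition P1 :: "(real \<times> real \<Rightarrow> complex) set" where
  "P1 = {f. \<exists>a b c :: real. f = (\<lambda>z. of_real (a + b * fst z + c * snd z))}"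

end

theory Submission
  imports Defs "HOL-Library.Real_Mod"
begin

text \<open>Each GPW is \<open>exp (i \<kappa> \<surd>\<epsilon>(c) (cos \<theta> x + sin \<theta> y) + H\<^sub>\<theta>)\<close> in coordinates centred
  at \<open>c\<close>. The recursion for the coefficients shows that all of them except the two linear
  ones are \<open>O(\<kappa>\<^sup>2)\<close> and depend on \<open>\<theta>\<close> only at order \<open>\<kappa>\<^sup>3\<close>. Expanding the exponential to
  second order, a combination with weights \<open>\<alpha>/p + O(1/\<kappa>)\<close> reproduces
  \<open>\<alpha> + \<beta> x + \<gamma> y\<close> up to \<open>O(\<kappa>\<^sup>2 (|\<alpha>| + |\<beta>| + |\<gamma>|))\<close>, because for \<open>p > 3\<close> equally
  spaced directions the first and third moments of \<open>(cos \<theta>, sin \<theta>)\<close> vanish and the second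
  is \<open>p/2\<close> times the identity. On the unit square \<open>|\<alpha>| + |\<beta>| + |\<gamma>| \<le> 6 \<parallel>f\<parallel>\<close>, and for
  \<open>\<kappa>\<close> above a fixed threshold the zero function already satisfies the bound.\<close>

section \<open>Equally spaced directions\<close>

definition gpw_direction :: "nat \<Rightarrow> nat \<Rightarrow> real" where
  "gpw_direction p l = 2 * pi * (real l - 1) / real p"

lemma sum_cis_gpw_direction:
  assumes "0 < k" "k < p"
  shows "(\<Sum>l\<in>{1..p}. cis (real k * gpw_direction p l)) = 0"
proof -
  define w where "w = cis (2 * pi * real k / real p)"
  have "(\<Sum>l\<in>{1..p}. cis (real k * gpw_direction p l)) = (\<Sum>m<p. w ^ m)"
  proof (rule sum.reindex_bij_witness[of _ Suc "\<lambda>l. l - 1"])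
    fix l assume "l \<in> {1..p}"
    then have "real k * gpw_direction p l = real (l - 1) * (2 * pi * real k / real p)"
      by (simp add: gpw_direction_def of_nat_diff)
    then show "w ^ (l - 1) = cis (real k * gpw_direction p l)"
      unfolding w_def Complex.DeMoivre by simp
  qed auto
  also have "\<dots> = 0"
  proof -
    have "w ^ p = 1"
      using assms by (simp add: w_def Complex.DeMoivre complex_eq_iff)
    moreover have "w \<noteq> 1"
    proof
      assume "w = 1"
      then obtain n :: int where "2 * pi * real k / real p = of_int n * (2 * pi)"
        by (auto simp: w_def cis_eq_1_iff)
      then have "real k / real p = of_int n"
        using assms by (simp add: field_simps)
      moreover have "0 < real k / real p" "real k / real p < 1"
        using assms by auto
      ultimately have "0 < n" "n < 1"
        by simp_all
      then show False by simp
    qed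
    ultimately show ?thesis by (simp add: sum_gp_strict)
  qed
  finally show ?thesis .
qed

lemma sum_harmonic_gpw_direction:
  assumes "0 < k" "k < p"
  shows "(\<Sum>l\<in>{1..p}. A * cos (real k * gpw_direction p l) + B * sin (real k * gpw_direction p l)) = 0"
  using arg_cong[OF sum_cis_gpw_direction[OF assms], of Re] arg_cong[OF sum_cis_gpw_direction[OF assms], of Im]
  by (simp add: sum.distrib flip: sum_distrib_left)

lemma linear_forms_mult:
  fixes t :: real
  shows "(a * cos t + b * sin t) * (c * cos t + d * sin t)
    = (a * c + b * d) / 2 + (a * c - b * d) / 2 * cos (2 * t) + (a * d + b * c) / 2 * sin (2 * t)"
proof -
  have "sin t ^ 2 + cos t ^ 2 = 1" "cos (2 * t) = cos t ^ 2 - sin t ^ 2" "sin (2 * t) = 2 * sin t * cos t"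
    by (simp_all add: cos_double sin_double)
  then show ?thesis
    by algebra
qed

lemma linear_forms_mult3:
  fixes a b c d e f t :: real
  defines "P \<equiv> (a * c - b * d) / 2" and "Q \<equiv> (a * d + b * c) / 2" and "R \<equiv> (a * c + b * d) / 2"
  shows "(a * cos t + b * sin t) * (c * cos t + d * sin t) * (e * cos t + f * sin t)
    = ((R + P / 2) * e + Q / 2 * f) * cos t + ((R - P / 2) * f + Q / 2 * e) * sin t
      + (P / 2 * e - Q / 2 * f) * cos (3 * t) + (P / 2 * f + Q / 2 * e) * sin (3 * t)"
proof -
  have "(a * cos t + b * sin t) * (c * cos t + d * sin t) * (e * cos t + f * sin t)
      = R * (e * cos t + f * sin t) + P * e * (cos t * cos (2 * t)) + P * f * (sin t * cos (2 * t))
        + Q * e * (cos t * sin (2 * t)) + Q * f * (sin t * sin (2 * t))"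
    unfolding linear_forms_mult P_def Q_def R_def by (simp add: field_simps)
  also have "\<dots> = ((R + P / 2) * e + Q / 2 * f) * cos t + ((R - P / 2) * f + Q / 2 * e) * sin t
      + (P / 2 * e - Q / 2 * f) * cos (3 * t) + (P / 2 * f + Q / 2 * e) * sin (3 * t)"
    by (simp add: cos_times_cos sin_times_cos cos_times_sin sin_times_sin field_simps)
  finally show ?thesis .
qed

lemma abs_linear_form_le: "\<bar>a * cos t + b * sin t\<bar> \<le> \<bar>a\<bar> + \<bar>b\<bar>" for a b t :: real
  by (rule order_trans[OF abs_triangle_ineq]) (simp add: abs_mult mult_left_le add_mono)

lemma sum_linear_form_gpw_direction:
  assumes "1 < p"
  shows "(\<Sum>l\<in>{1..p}. a * cos (gpw_direction p l) + b * sin (gpw_direction p l)) = 0"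
  using sum_harmonic_gpw_direction[of 1 p a b] assms by simp

lemma sum_linear_forms_mult_gpw_direction:
  assumes "2 < p"
  shows "(\<Sum>l\<in>{1..p}. (a * cos (gpw_direction p l) + b * sin (gpw_direction p l))
      * (c * cos (gpw_direction p l) + d * sin (gpw_direction p l))) = real p / 2 * (a * c + b * d)"
  using sum_harmonic_gpw_direction[of 2 p "(a * c - b * d) / 2" "(a * d + b * c) / 2"] assms
  unfolding linear_forms_mult by (simp add: sum.distrib)

lemma sum_linear_forms_mult3_gpw_direction:
  assumes "3 < p"
  shows "(\<Sum>l\<in>{1..p}. (a * cos (gpw_direction p l) + b * sin (gpw_direction p l))
      * (c * cos (gpw_direction p l) + d * sin (gpw_direction p l))
      * (e * cos (gpw_direction p l) + f * sin (gpw_direction p l))) = 0"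
  using sum_harmonic_gpw_direction[of 1 p] sum_harmonic_gpw_direction[of 3 p] assms
  unfolding linear_forms_mult3 by (simp add: sum.distrib)

section \<open>Second-order expansion of the exponential\<close>

lemma norm_exp_minus_quadratic_le:
  fixes x :: "'a::{real_normed_field,banach}"
  assumes "norm x \<le> 1"
  shows "norm (exp x - 1 - x - x^2 / 2) \<le> 3 * norm x ^ 3"
proof -
  define r where "r = norm x"
  have tail: "exp x - 1 - x - x^2 / 2 = (\<Sum>n. inverse (fact (n + 3)) *\<^sub>R x ^ (n + 3))"
    using exp_first_terms[of x 3] by (simp add: eval_nat_numeral scaleR_conv_of_real field_simps)
  have norm_summable: "summable (\<lambda>n. norm (inverse (fact (n + 3)) *\<^sub>R x ^ (n + 3)))"
    using summable_exp_generic[of r, THEN summable_ignore_initial_segment, of 3]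
    by (simp add: r_def norm_power)
  have summable_exp_r: "summable (\<lambda>n. r ^ 3 * (inverse (fact n) * r ^ n))"
    using summable_exp_generic[of r] by (intro summable_mult) simp
  have term_le: "norm (inverse (fact (n + 3)) *\<^sub>R x ^ (n + 3)) \<le> r ^ 3 * (inverse (fact n) * r ^ n)" for n
  proof -
    have "inverse (fact (n + 3)) \<le> (inverse (fact n) :: real)"
      by (intro le_imp_inverse_le fact_mono) auto
    then have "inverse (fact (n + 3)) * r ^ (n + 3) \<le> inverse (fact n) * r ^ (n + 3)"
      by (intro mult_right_mono) (auto simp: r_def)
    then show ?thesis
      by (simp add: norm_power norm_mult r_def power_add mult_ac)
  qed
  have "norm (exp x - 1 - x - x^2 / 2) \<le> (\<Sum>n. r ^ 3 * (inverse (fact n) * r ^ n))"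
    unfolding tail
    by (rule order_trans[OF summable_norm[OF norm_summable] suminf_le[OF term_le norm_summable summable_exp_r]])
  also have "\<dots> = r ^ 3 * exp r"
    using summable_exp_generic[of r] by (simp add: suminf_mult exp_def divide_inverse mult.commute)
  also have "\<dots> \<le> r ^ 3 * 3"
  proof (rule mult_left_mono)
    show "exp r \<le> 3"
      using exp_le assms by (simp add: r_def order_trans[OF exp_mono])
  qed (simp add: r_def)
  finally show ?thesis by (simp add: r_def)
qed

lemma norm_exp_expansion_remainder_le:
  fixes w h :: "'a::{real_normed_field,banach}"
  assumes w: "norm w \<le> a * \<kappa>" and h: "norm h \<le> c * \<kappa>^2"
    and \<kappa>: "0 < \<kappa>" "\<kappa> \<le> 1" and small: "\<kappa> * (a + c) \<le> 1"
  shows "norm (exp (w + h) - 1 - w - w^2 / 2 - h) \<le> (3 * (a + c)^3 + a * c + c^2) * \<kappa>^3"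
proof -
  have "0 \<le> a * \<kappa>" "0 \<le> c * \<kappa>^2"
    using w h norm_ge_zero order_trans by blast+
  note nonneg = this
  then have "0 \<le> a" "0 \<le> c"
    using \<kappa> by (simp_all add: zero_le_mult_iff)
  have "\<kappa>^2 \<le> \<kappa>" "\<kappa>^4 \<le> \<kappa>^3"
    using power_decreasing[of 1 2 \<kappa>] power_decreasing[of 3 4 \<kappa>] \<kappa> by simp_all
  have "c * \<kappa>^2 \<le> c * \<kappa>"
    using \<open>\<kappa>^2 \<le> \<kappa>\<close> \<open>0 \<le> c\<close> by (rule mult_left_mono)
  have "c^2 * \<kappa>^4 \<le> c^2 * \<kappa>^3"
    using \<open>\<kappa>^4 \<le> \<kappa>^3\<close> by (rule mult_left_mono) simp
  moreover have "(c * \<kappa>^2)^2 = c^2 * \<kappa>^4" "0 \<le> c^2 * \<kappa>^4"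
    using \<kappa> by (simp_all add: power2_eq_square power4_eq_xxxx)
  ultimately have "(c * \<kappa>^2)^2 / 2 \<le> c^2 * \<kappa>^3"
    by linarith
  have wh: "norm (w + h) \<le> \<kappa> * (a + c)"
    using norm_triangle_ineq[of w h] w h \<open>c * \<kappa>^2 \<le> c * \<kappa>\<close> by (simp add: algebra_simps)
  have split: "exp (w + h) - 1 - w - w^2 / 2 - h
      = (exp (w + h) - 1 - (w + h) - (w + h)^2 / 2) + w * h + h^2 / 2"
    by (simp add: power2_eq_square field_simps)
  have "norm (exp (w + h) - 1 - w - w^2 / 2 - h)
      \<le> 3 * norm (w + h) ^ 3 + norm w * norm h + norm h ^ 2 / 2"
    unfolding split using norm_exp_minus_quadratic_le[of "w + h"] wh small
    by (intro order_trans[OF norm_triangle_ineq] add_mono order_trans[OF norm_triangle_ineq])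
      (auto simp: norm_mult norm_divide norm_power)
  also have "\<dots> \<le> 3 * (\<kappa> * (a + c)) ^ 3 + (a * \<kappa>) * (c * \<kappa>^2) + (c * \<kappa>^2)^2 / 2"
    using wh w h nonneg by (intro add_mono mult_mono power_mono divide_right_mono) auto
  also have "\<dots> \<le> (3 * (a + c)^3 + a * c + c^2) * \<kappa>^3"
    using \<open>(c * \<kappa>^2)^2 / 2 \<le> c^2 * \<kappa>^3\<close> by (simp add: power_mult_distrib power2_eq_square power3_eq_cube algebra_simps)
  finally show ?thesis .
qed

section \<open>Size of the GPW coefficients\<close>

definition bounded_order2 :: "real \<Rightarrow> real \<Rightarrow> ('a \<Rightarrow> complex) \<Rightarrow> bool" where
  "bounded_order2 \<kappa> c F \<longleftrightarrow> (\<forall>\<theta>. norm (F \<theta>) \<le> c * \<kappa>^2) \<and> (\<forall>\<theta> \<theta>'. norm (F \<theta> - F \<theta>') \<le> c * \<kappa>^3)"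

lemma bounded_order2_const:
  assumes "norm A \<le> c * \<kappa>^2" "0 \<le> \<kappa>"
  shows "bounded_order2 \<kappa> c (\<lambda>_. A)"
proof -
  have "0 \<le> c * \<kappa>^2"
    using assms(1) norm_ge_zero order_trans by blast
  then have "0 \<le> c * \<kappa>^3"
    using assms(2) by (simp add: zero_le_mult_iff)
  then show ?thesis
    using assms by (simp add: bounded_order2_def)
qed

lemma bounded_order2_add:
  assumes "bounded_order2 \<kappa> c F" "bounded_order2 \<kappa> c' G"
  shows "bounded_order2 \<kappa> (c + c') (\<lambda>\<theta>. F \<theta> + G \<theta>)"
  unfolding bounded_order2_def
proof (intro conjI allI)
  fix \<theta> \<theta>'
  have "norm (F \<theta>) \<le> c * \<kappa>^2" "norm (G \<theta>) \<le> c' * \<kappa>^2"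
       "norm (F \<theta> - F \<theta>') \<le> c * \<kappa>^3" "norm (G \<theta> - G \<theta>') \<le> c' * \<kappa>^3"
    using assms by (auto simp: bounded_order2_def)
  moreover have "F \<theta> + G \<theta> - (F \<theta>' + G \<theta>') = (F \<theta> - F \<theta>') + (G \<theta> - G \<theta>')"
    by simp
  then have "norm (F \<theta> + G \<theta> - (F \<theta>' + G \<theta>')) \<le> norm (F \<theta> - F \<theta>') + norm (G \<theta> - G \<theta>')"
    by (metis norm_triangle_ineq)
  ultimately show "norm (F \<theta> + G \<theta>) \<le> (c + c') * \<kappa>^2"
    and "norm (F \<theta> + G \<theta> - (F \<theta>' + G \<theta>')) \<le> (c + c') * \<kappa>^3"
    using norm_triangle_ineq[of "F \<theta>" "G \<theta>"] unfolding distrib_right by linarith+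
qed

lemma bounded_order2_sum:
  assumes "finite I" "\<And>i. i \<in> I \<Longrightarrow> bounded_order2 \<kappa> (c i) (F i)"
  shows "bounded_order2 \<kappa> (\<Sum>i\<in>I. c i) (\<lambda>\<theta>. \<Sum>i\<in>I. F i \<theta>)"
  using assms
proof (induction I rule: finite_induct)
  case empty
  then show ?case by (simp add: bounded_order2_def)
next
  case (insert i I)
  then show ?case
    by (simp add: bounded_order2_add)
qed

lemma bounded_order2_scale:
  assumes "bounded_order2 \<kappa> c F" "norm z \<le> r"
  shows "bounded_order2 \<kappa> (r * c) (\<lambda>\<theta>. z * F \<theta>)"
  unfolding bounded_order2_def
proof (intro conjI allI)
  fix \<theta> \<theta>'
  show "norm (z * F \<theta>) \<le> r * c * \<kappa>^2"
    using assms unfolding bounded_order2_def norm_mult mult.assoc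
    by (meson mult_mono norm_ge_zero order_trans)
  show "norm (z * F \<theta> - z * F \<theta>') \<le> r * c * \<kappa>^3"
    using assms unfolding bounded_order2_def mult.assoc right_diff_distrib[symmetric] norm_mult
    by (meson mult_mono norm_ge_zero order_trans)
qed

lemma bounded_order2_mult:
  assumes G: "\<And>\<theta>. norm (G \<theta>) \<le> a * \<kappa>" and F: "bounded_order2 \<kappa> c F"
    and \<kappa>: "0 < \<kappa>" "\<kappa> \<le> 1"
  shows "bounded_order2 \<kappa> (3 * a * c) (\<lambda>\<theta>. G \<theta> * F \<theta>)"
  unfolding bounded_order2_def
proof (intro conjI allI)
  fix \<theta> \<theta>'
  have F\<theta>: "norm (F \<theta>) \<le> c * \<kappa>^2" "norm (F \<theta> - F \<theta>') \<le> c * \<kappa>^3"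
    using F by (auto simp: bounded_order2_def)
  have nonneg: "0 \<le> a * \<kappa>" "0 \<le> c * \<kappa>^2"
    using G[of \<theta>] F\<theta> norm_ge_zero[of "G \<theta>"] norm_ge_zero[of "F \<theta>"] by linarith+
  then have "0 \<le> a" "0 \<le> c"
    using \<kappa> by (simp_all add: zero_le_mult_iff)
  have "\<kappa>^3 \<le> \<kappa>^2" "\<kappa>^4 \<le> \<kappa>^3"
    using power_decreasing[of 2 3 \<kappa>] power_decreasing[of 3 4 \<kappa>] \<kappa> by simp_all
  have "norm (G \<theta> * F \<theta>) \<le> (a * \<kappa>) * (c * \<kappa>^2)"
    unfolding norm_mult using G F\<theta> nonneg by (intro mult_mono) auto
  also have "\<dots> = a * c * \<kappa>^3"
    by (simp add: power2_eq_square power3_eq_cube)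
  also have "\<dots> \<le> 3 * a * c * \<kappa>^2"
    using \<open>\<kappa>^3 \<le> \<kappa>^2\<close> \<open>0 \<le> a\<close> \<open>0 \<le> c\<close> \<kappa> by (intro mult_mono) auto
  finally show "norm (G \<theta> * F \<theta>) \<le> 3 * a * c * \<kappa>^2" .
  have "G \<theta> * F \<theta> - G \<theta>' * F \<theta>' = (G \<theta> - G \<theta>') * F \<theta> + G \<theta>' * (F \<theta> - F \<theta>')"
    by (simp add: algebra_simps)
  then have "norm (G \<theta> * F \<theta> - G \<theta>' * F \<theta>')
      \<le> norm (G \<theta> - G \<theta>') * norm (F \<theta>) + norm (G \<theta>') * norm (F \<theta> - F \<theta>')"
    by (metis norm_mult norm_triangle_ineq)
  also have "\<dots> \<le> (2 * a * \<kappa>) * (c * \<kappa>^2) + (a * \<kappa>) * (c * \<kappa>^3)"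
  proof (intro add_mono mult_mono)
    show "norm (G \<theta> - G \<theta>') \<le> 2 * a * \<kappa>"
      using G[of \<theta>] G[of \<theta>'] norm_triangle_ineq4[of "G \<theta>" "G \<theta>'"] by linarith
  qed (use G F\<theta> nonneg in \<open>auto simp: mult.commute\<close>)
  also have "\<dots> = 2 * a * c * \<kappa>^3 + a * c * \<kappa>^4"
    by (simp add: power2_eq_square power3_eq_cube power4_eq_xxxx algebra_simps)
  also have "\<dots> \<le> 3 * a * c * \<kappa>^3"
    using mult_left_mono[OF \<open>\<kappa>^4 \<le> \<kappa>^3\<close>, of "a * c"] \<open>0 \<le> a\<close> \<open>0 \<le> c\<close> by simp
  finally show "norm (G \<theta> * F \<theta> - G \<theta>' * F \<theta>') \<le> 3 * a * c * \<kappa>^3" .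
qed

lemma bounded_order2_norm_le:
  assumes "bounded_order2 \<kappa> c F" "0 < \<kappa>" "\<kappa> \<le> 1"
  shows "norm (F \<theta>) \<le> c * \<kappa>"
proof -
  have "0 \<le> c * \<kappa>^2"
    using assms(1) norm_ge_zero order_trans unfolding bounded_order2_def by blast
  then have "c * \<kappa>^2 \<le> c * \<kappa>"
    using assms(2,3) power_decreasing[of 1 2 \<kappa>] by (intro mult_left_mono) (auto simp: zero_le_mult_iff)
  then show ?thesis
    using assms(1) unfolding bounded_order2_def by (meson order_trans)
qed

text \<open>The \<open>\<kappa>\<^sup>3\<close> bound on the dependence on the direction is needed because the
  approximating weights below carry a factor \<open>1 / \<kappa>\<close>.\<close>

definition gpw_coef_estimate :: "(nat \<Rightarrow> nat \<Rightarrow> real) \<Rightarrow> nat \<Rightarrow> real \<Rightarrow> nat \<Rightarrow> nat \<Rightarrow> bool" where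
  "gpw_coef_estimate d q M i j \<longleftrightarrow> (\<forall>\<kappa>. 0 < \<kappa> \<longrightarrow> \<kappa> \<le> 1 \<longrightarrow>
     (\<forall>\<theta>. norm (gpw_coef \<kappa> d \<theta> q i j) \<le> M * \<kappa>) \<and>
     (i + j \<noteq> 1 \<longrightarrow> bounded_order2 \<kappa> M (\<lambda>\<theta>. gpw_coef \<kappa> d \<theta> q i j)))"

lemma gpw_coef_estimate_zero:
  assumes "\<And>\<kappa> \<theta>. gpw_coef \<kappa> d \<theta> q i j = 0"
  shows "gpw_coef_estimate d q 0 i j"
  using assms by (simp add: gpw_coef_estimate_def bounded_order2_def)

lemma gpw_coef_estimate_first_rows:
  assumes "0 \<le> d 0 0" "i \<le> 1"
  shows "gpw_coef_estimate d q (sqrt (d 0 0)) i j"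
  unfolding gpw_coef_estimate_def
proof (intro allI impI conjI)
  fix \<kappa> \<theta> :: real assume \<kappa>: "0 < \<kappa>" "\<kappa> \<le> 1"
  have "\<bar>sin \<theta>\<bar> \<le> 1" "\<bar>cos \<theta>\<bar> \<le> 1"
    by simp_all
  then show "norm (gpw_coef \<kappa> d \<theta> q i j) \<le> sqrt (d 0 0) * \<kappa>"
    using assms \<kappa> mult_left_le[of "\<bar>sin \<theta>\<bar>" "sqrt (d 0 0) * \<kappa>"] mult_left_le[of "\<bar>cos \<theta>\<bar>" "sqrt (d 0 0) * \<kappa>"]
    by (cases i) (auto simp: norm_mult abs_mult mult_ac)
next
  fix \<kappa> :: real assume "0 < \<kappa>" "i + j \<noteq> 1"
  then show "bounded_order2 \<kappa> (sqrt (d 0 0)) (\<lambda>\<theta>. gpw_coef \<kappa> d \<theta> q i j)"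
    using assms by (cases i) (auto simp: bounded_order2_def)
qed

text \<open>The only product of two linear coefficients in the recursion; it cancels against
  the \<open>\<kappa>\<^sup>2 \<epsilon>\<close> term.\<close>

lemma gpw_coef_2_0:
  assumes "0 \<le> d 0 0" "1 \<le> q"
  shows "gpw_coef \<kappa> d \<theta> q 2 0 = 0"
proof -
  have "gpw_coef \<kappa> d \<theta> q 2 0 = - (of_real (\<kappa>^2 * d 0 0) + (gpw_coef \<kappa> d \<theta> q 1 0 ^ 2 + gpw_coef \<kappa> d \<theta> q 0 1 ^ 2)) / 2"
    using assms(2) by (simp add: numeral_2_eq_2 power2_eq_square del: gpw_coef.simps(2))
  also have "gpw_coef \<kappa> d \<theta> q 1 0 ^ 2 + gpw_coef \<kappa> d \<theta> q 0 1 ^ 2 = - of_real ((\<kappa> * sqrt (d 0 0))^2 * (cos \<theta>^2 + sin \<theta>^2))"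
    by (simp only: gpw_coef.simps One_nat_def if_True power_mult_distrib of_real_mult of_real_power of_real_add) (simp add: algebra_simps)
  also have "(\<kappa> * sqrt (d 0 0))^2 * (cos \<theta>^2 + sin \<theta>^2) = \<kappa>^2 * d 0 0"
    using assms(1) by (simp add: power_mult_distrib)
  finally show ?thesis by simp
qed

lemma bounded_order2_gpw_coef_mult:
  assumes "gpw_coef_estimate d q M i j" "gpw_coef_estimate d q M' i' j'"
    and "i + j \<noteq> 1 \<or> i' + j' \<noteq> 1" and \<kappa>: "0 < \<kappa>" "\<kappa> \<le> 1"
  shows "bounded_order2 \<kappa> (3 * M * M') (\<lambda>\<theta>. gpw_coef \<kappa> d \<theta> q i j * gpw_coef \<kappa> d \<theta> q i' j')"
  using assms(3)
proof
  assume "i + j \<noteq> 1"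
  then have "bounded_order2 \<kappa> (3 * M' * M) (\<lambda>\<theta>. gpw_coef \<kappa> d \<theta> q i' j' * gpw_coef \<kappa> d \<theta> q i j)"
    using assms(1,2) \<kappa> by (intro bounded_order2_mult) (auto simp: gpw_coef_estimate_def)
  then show ?thesis
    by (simp add: mult_ac)
next
  assume "i' + j' \<noteq> 1"
  then show ?thesis
    using assms(1,2) \<kappa> by (intro bounded_order2_mult) (auto simp: gpw_coef_estimate_def)
qed

lemma gpw_coef_Suc_Suc:
  assumes "i + j + 2 \<le> q + 1"
  shows "gpw_coef \<kappa> d \<theta> q (Suc (Suc i)) j = - 1 / of_nat ((i + 2) * (i + 1)) *
    (of_real (\<kappa>^2 * d i j / (fact i * fact j)) + of_nat ((j + 2) * (j + 1)) * gpw_coef \<kappa> d \<theta> q i (j + 2)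
     + (\<Sum>k\<in>{0..i}. \<Sum>l\<in>{0..j}. of_nat ((i - k + 1) * (k + 1))
          * (gpw_coef \<kappa> d \<theta> q (i - k + 1) (j - l) * gpw_coef \<kappa> d \<theta> q (k + 1) l))
     + (\<Sum>k\<in>{0..j}. \<Sum>l\<in>{0..i}. of_nat ((j - k + 1) * (k + 1))
          * (gpw_coef \<kappa> d \<theta> q (i - l) (j - k + 1) * gpw_coef \<kappa> d \<theta> q l (k + 1))))"
  using assms by (subst gpw_coef.simps(3)) (simp only: mult.assoc if_not_P not_less, algebra)

lemma gpw_coef_estimate_recursion:
  assumes Mf: "\<And>i' j. i' \<le> Suc i \<Longrightarrow> gpw_coef_estimate d q (Mf i' j) i' j"
    and ij: "(i, j) \<noteq> (0, 0)" "i + j + 2 \<le> q + 1"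
  shows "\<exists>M. gpw_coef_estimate d q M (Suc (Suc i)) j"
proof -
  define M where "M = \<bar>d i j\<bar> / (fact i * fact j) + real ((j + 2) * (j + 1)) * Mf i (j + 2)
      + (\<Sum>k\<in>{0..i}. \<Sum>l\<in>{0..j}. real ((i - k + 1) * (k + 1)) * (3 * Mf (i - k + 1) (j - l) * Mf (k + 1) l))
      + (\<Sum>k\<in>{0..j}. \<Sum>l\<in>{0..i}. real ((j - k + 1) * (k + 1)) * (3 * Mf (i - l) (j - k + 1) * Mf l (k + 1)))"
  have bounded: "bounded_order2 \<kappa> M (\<lambda>\<theta>. gpw_coef \<kappa> d \<theta> q (Suc (Suc i)) j)"
    if \<kappa>: "0 < \<kappa>" "\<kappa> \<le> 1" for \<kappa>
  proof -
    let ?c = "\<lambda>\<theta> a b. gpw_coef \<kappa> d \<theta> q a b"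
    have A: "bounded_order2 \<kappa> (\<bar>d i j\<bar> / (fact i * fact j)) (\<lambda>_. of_real (\<kappa>^2 * d i j / (fact i * fact j)))"
      using \<kappa> by (intro bounded_order2_const) (simp_all add: abs_mult mult.commute del: of_real_mult of_real_divide)
    have "norm (of_nat ((j + 2) * (j + 1)) :: complex) \<le> real ((j + 2) * (j + 1))"
      by (simp only: norm_of_nat order_refl)
    then have B: "bounded_order2 \<kappa> (real ((j + 2) * (j + 1)) * Mf i (j + 2))
        (\<lambda>\<theta>. of_nat ((j + 2) * (j + 1)) * ?c \<theta> i (j + 2))"
      by (rule bounded_order2_scale[rotated]) (use Mf[of i "j + 2"] \<kappa> in \<open>auto simp: gpw_coef_estimate_def\<close>)
    have S1: "bounded_order2 \<kappa>
        (\<Sum>k\<in>{0..i}. \<Sum>l\<in>{0..j}. real ((i - k + 1) * (k + 1)) * (3 * Mf (i - k + 1) (j - l) * Mf (k + 1) l))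
        (\<lambda>\<theta>. \<Sum>k\<in>{0..i}. \<Sum>l\<in>{0..j}. of_nat ((i - k + 1) * (k + 1)) * (?c \<theta> (i - k + 1) (j - l) * ?c \<theta> (k + 1) l))"
      using ij by (intro bounded_order2_sum bounded_order2_scale bounded_order2_gpw_coef_mult Mf \<kappa>)
        (auto simp del: of_nat_mult of_nat_add of_nat_Suc)
    have S2: "bounded_order2 \<kappa>
        (\<Sum>k\<in>{0..j}. \<Sum>l\<in>{0..i}. real ((j - k + 1) * (k + 1)) * (3 * Mf (i - l) (j - k + 1) * Mf l (k + 1)))
        (\<lambda>\<theta>. \<Sum>k\<in>{0..j}. \<Sum>l\<in>{0..i}. of_nat ((j - k + 1) * (k + 1)) * (?c \<theta> (i - l) (j - k + 1) * ?c \<theta> l (k + 1)))"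
      using ij by (intro bounded_order2_sum bounded_order2_scale bounded_order2_gpw_coef_mult Mf \<kappa>)
        (auto simp del: of_nat_mult of_nat_add of_nat_Suc)
    have "norm (- 1 / of_nat ((i + 2) * (i + 1)) :: complex) \<le> 1"
      by (simp only: norm_divide norm_minus_cancel norm_one norm_of_nat) (simp add: divide_le_eq)
    from bounded_order2_scale[OF bounded_order2_add[OF bounded_order2_add[OF bounded_order2_add[OF A B] S1] S2] this]
    show ?thesis
      unfolding M_def gpw_coef_Suc_Suc[OF ij(2)] mult_1_left .
  qed
  have "gpw_coef_estimate d q M (Suc (Suc i)) j"
    unfolding gpw_coef_estimate_def using bounded bounded_order2_norm_le[OF bounded] by blast
  then show ?thesis ..
qed

lemma gpw_coef_estimate_exists:
  assumes "0 \<le> d 0 0"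
  shows "\<exists>M. gpw_coef_estimate d q M i j"
proof (induction i arbitrary: j rule: less_induct)
  case (less i)
  show ?case
  proof (cases "i \<le> 1")
    case True
    then show ?thesis
      using gpw_coef_estimate_first_rows[where d = d, OF assms True] by blast
  next
    case False
    define i0 where "i0 = i - 2"
    have i: "i = Suc (Suc i0)"
      using False by (simp add: i0_def)
    define Mf where "Mf i' j = (SOME M. gpw_coef_estimate d q M i' j)" for i' j
    have Mf: "gpw_coef_estimate d q (Mf i' j) i' j" if "i' \<le> Suc i0" for i' j
    proof -
      have "i' < i"
        using that i by simp
      then show ?thesis
        unfolding Mf_def by (rule someI_ex[OF less.IH])
    qed
    consider "q + 1 < i + j" | "i + j \<le> q + 1" "i0 = 0" "j = 0" | "i + j \<le> q + 1" "(i0, j) \<noteq> (0, 0)"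
      by fastforce
    then show ?thesis
    proof cases
      case 1
      then have "gpw_coef \<kappa> d \<theta> q i j = 0" for \<kappa> \<theta>
        using i by simp
      then show ?thesis
        using gpw_coef_estimate_zero by blast
    next
      case 2
      then have "gpw_coef \<kappa> d \<theta> q i j = 0" for \<kappa> \<theta>
        using i gpw_coef_2_0[where d = d and q = q] assms by (simp add: numeral_2_eq_2)
      then show ?thesis
        using gpw_coef_estimate_zero by blast
    next
      case 3
      then show ?thesis
        using i gpw_coef_estimate_recursion[where i = i0 and Mf = Mf, OF Mf] by simp
    qed
  qed
qed

definition gpw_phase_remainder ::
  "real \<Rightarrow> (nat \<Rightarrow> nat \<Rightarrow> real) \<Rightarrow> real \<Rightarrow> nat \<Rightarrow> real \<times> real \<Rightarrow> real \<times> real \<Rightarrow> complex" where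
  "gpw_phase_remainder \<kappa> d \<theta> q c z =
     (\<Sum>(i, j)\<in>{(i, j). i + j \<le> q + 1 \<and> i + j \<noteq> 1}.
        gpw_coef \<kappa> d \<theta> q i j * of_real ((fst z - fst c) ^ i * (snd z - snd c) ^ j))"

lemma gpw_eq_exp_plane_wave:
  "gpw \<kappa> d \<theta> q c z =
     exp (\<i> * of_real (\<kappa> * sqrt (d 0 0) * (cos \<theta> * (fst z - fst c) + sin \<theta> * (snd z - snd c)))
          + gpw_phase_remainder \<kappa> d \<theta> q c z)"
proof -
  let ?f = "\<lambda>(i, j). gpw_coef \<kappa> d \<theta> q i j * of_real ((fst z - fst c) ^ i * (snd z - snd c) ^ j)"
  have fin: "finite {(i, j). i + j \<le> q + 1 \<and> i + j \<noteq> 1}"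
    by (rule finite_subset[of _ "{..q + 1} \<times> {..q + 1}"]) auto
  have "{(i, j). i + j \<le> q + 1} = {(1, 0), (0, 1)} \<union> {(i, j). i + j \<le> q + 1 \<and> i + j \<noteq> 1}"
    by auto
  then have split: "sum ?f {(i, j). i + j \<le> q + 1} = sum ?f {(1, 0), (0, 1)} + gpw_phase_remainder \<kappa> d \<theta> q c z"
    unfolding gpw_phase_remainder_def using fin by (simp add: sum.union_disjoint)
  have "sum ?f {(1, 0), (0, 1)}
      = \<i> * of_real (\<kappa> * sqrt (d 0 0) * (cos \<theta> * (fst z - fst c) + sin \<theta> * (snd z - snd c)))"
    by (simp add: algebra_simps)
  then show ?thesis
    unfolding gpw_def split by simp
qed

lemma bounded_order2_gpw_phase_remainder:
  assumes "0 \<le> d 0 0"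
  obtains C where "\<And>\<kappa> z. 0 < \<kappa> \<Longrightarrow> \<kappa> \<le> 1 \<Longrightarrow> \<bar>fst z - fst c\<bar> \<le> 1 \<Longrightarrow> \<bar>snd z - snd c\<bar> \<le> 1 \<Longrightarrow>
    bounded_order2 \<kappa> C (\<lambda>\<theta>. gpw_phase_remainder \<kappa> d \<theta> q c z)"
proof -
  define Mf where "Mf i j = (SOME M. gpw_coef_estimate d q M i j)" for i j
  have Mf: "gpw_coef_estimate d q (Mf i j) i j" for i j
    unfolding Mf_def by (rule someI_ex[OF gpw_coef_estimate_exists[where d = d, OF assms]])
  have "bounded_order2 \<kappa> (\<Sum>(i, j)\<in>{(i, j). i + j \<le> q + 1 \<and> i + j \<noteq> 1}. 1 * Mf i j)
      (\<lambda>\<theta>. gpw_phase_remainder \<kappa> d \<theta> q c z)"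
    if \<kappa>: "0 < \<kappa>" "\<kappa> \<le> 1" and z: "\<bar>fst z - fst c\<bar> \<le> 1" "\<bar>snd z - snd c\<bar> \<le> 1" for \<kappa> z
    unfolding gpw_phase_remainder_def
  proof (rule bounded_order2_sum)
    show "finite {(i, j). i + j \<le> q + 1 \<and> i + j \<noteq> 1}"
      by (rule finite_subset[of _ "{..q + 1} \<times> {..q + 1}"]) auto
  next
    fix x assume "x \<in> {(i, j). i + j \<le> q + 1 \<and> i + j \<noteq> 1}"
    then obtain i j where x: "x = (i, j)" "i + j \<noteq> 1"
      by blast
    have "norm (of_real ((fst z - fst c) ^ i * (snd z - snd c) ^ j) :: complex) \<le> 1"
      unfolding norm_of_real using z by (simp add: abs_mult power_abs mult_le_one power_le_one)
    then have "bounded_order2 \<kappa> (1 * Mf i j)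
        (\<lambda>\<theta>. of_real ((fst z - fst c) ^ i * (snd z - snd c) ^ j) * gpw_coef \<kappa> d \<theta> q i j)"
      using Mf[of i j] x(2) \<kappa> by (intro bounded_order2_scale) (auto simp: gpw_coef_estimate_def)
    then show "bounded_order2 \<kappa> (case x of (i, j) \<Rightarrow> 1 * Mf i j)
        (\<lambda>\<theta>. case x of (i, j) \<Rightarrow> gpw_coef \<kappa> d \<theta> q i j * of_real ((fst z - fst c) ^ i * (snd z - snd c) ^ j))"
      by (simp add: x mult.commute)
  qed
  then show ?thesis
    using that by blast
qed

section \<open>Approximation of linear functions\<close>

lemma sum_weighted_expansion_eq:
  fixes w b h r \<phi> :: "'a \<Rightarrow> complex" and \<alpha> g \<kappa> :: complex
  assumes "finite L" "card L \<noteq> 0" "\<kappa> \<noteq> 0"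
    and "(\<Sum>l\<in>L. w l) = 0" "(\<Sum>l\<in>L. b l) = 0" "(\<Sum>l\<in>L. b l * w l) = \<kappa> * g" "(\<Sum>l\<in>L. b l * w l ^ 2) = 0"
    and \<phi>: "\<And>l. \<phi> l = 1 + w l + w l ^ 2 / 2 + h l + r l"
  shows "(\<Sum>l\<in>L. (\<alpha> / of_nat (card L) + b l / \<kappa>) * \<phi> l) - (\<alpha> + g)
    = \<alpha> / of_nat (card L) * (\<Sum>l\<in>L. w l ^ 2 / 2 + h l + r l) + (\<Sum>l\<in>L. b l * (h l - h m + r l)) / \<kappa>"
proof -
  have Q: "(\<Sum>l\<in>L. b l * \<phi> l) = \<kappa> * g + (\<Sum>l\<in>L. b l * (h l - h m + r l))"
  proof -
    have "(\<Sum>l\<in>L. b l * \<phi> l) = (\<Sum>l\<in>L. b l) * (1 + h m) + (\<Sum>l\<in>L. b l * w l)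
        + (\<Sum>l\<in>L. b l * w l ^ 2) / 2 + (\<Sum>l\<in>L. b l * (h l - h m + r l))"
      unfolding \<phi> by (simp add: sum.distrib sum_subtractf sum_distrib_right sum_distrib_left
          sum_divide_distrib algebra_simps)
    then show ?thesis
      using assms(5-7) by simp
  qed
  have P: "(\<Sum>l\<in>L. \<phi> l) = of_nat (card L) + (\<Sum>l\<in>L. w l ^ 2 / 2 + h l + r l)"
    unfolding \<phi> using assms(4) by (simp add: sum.distrib algebra_simps)
  have "(\<Sum>l\<in>L. (\<alpha> / of_nat (card L) + b l / \<kappa>) * \<phi> l)
      = \<alpha> / of_nat (card L) * (\<Sum>l\<in>L. \<phi> l) + (\<Sum>l\<in>L. b l * \<phi> l) / \<kappa>"
    by (simp add: distrib_right sum.distrib sum_distrib_left sum_divide_distrib)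
  then show ?thesis
    unfolding P Q using assms(2,3) by (simp add: field_simps)
qed

lemma norm_weighted_expansion_le:
  fixes w b h r \<phi> :: "'a \<Rightarrow> complex" and \<alpha> g :: complex and \<kappa> A B C K :: real
  assumes L: "finite L" "card L \<noteq> 0" and \<kappa>: "0 < \<kappa>" "\<kappa> \<le> 1"
    and moments: "(\<Sum>l\<in>L. w l) = 0" "(\<Sum>l\<in>L. b l) = 0" "(\<Sum>l\<in>L. b l * w l) = of_real \<kappa> * g"
      "(\<Sum>l\<in>L. b l * w l ^ 2) = 0"
    and \<phi>: "\<And>l. \<phi> l = 1 + w l + w l ^ 2 / 2 + h l + r l"
    and w: "\<And>l. norm (w l) \<le> A * \<kappa>"
    and h: "\<And>l. norm (h l) \<le> C * \<kappa>^2" "\<And>l. norm (h l - h m) \<le> C * \<kappa>^3"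
    and r: "\<And>l. norm (r l) \<le> K * \<kappa>^3" and b: "\<And>l. norm (b l) \<le> B"
  shows "norm ((\<Sum>l\<in>L. (\<alpha> / of_nat (card L) + b l / of_real \<kappa>) * \<phi> l) - (\<alpha> + g))
    \<le> (norm \<alpha> * (A^2 / 2 + C + K) + real (card L) * B * (C + K)) * \<kappa>^2"
proof -
  have "\<kappa>^3 \<le> \<kappa>^2"
    using \<kappa> power_decreasing[of 2 3 \<kappa>] by simp
  have "0 \<le> K * \<kappa>^3"
    using r norm_ge_zero order_trans by blast
  then have "0 \<le> K"
    using \<kappa> by (simp add: zero_le_mult_iff)
  define X where "X = (A^2 / 2 + C + K) * \<kappa>^2"
  have "norm (w l ^ 2 / 2 + h l + r l) \<le> X" for l
  proof -
    have "norm (w l ^ 2 / 2) \<le> (A * \<kappa>)^2 / 2"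
      unfolding norm_divide norm_power using w by (simp add: power_mono)
    moreover have "K * \<kappa>^3 \<le> K * \<kappa>^2"
      using \<open>\<kappa>^3 \<le> \<kappa>^2\<close> \<open>0 \<le> K\<close> by (rule mult_left_mono)
    ultimately show ?thesis
      using h(1)[of l] r[of l] norm_triangle_ineq[of "w l ^ 2 / 2 + h l" "r l"]
        norm_triangle_ineq[of "w l ^ 2 / 2" "h l"]
      by (simp add: X_def power_mult_distrib algebra_simps)
  qed
  then have "norm (\<Sum>l\<in>L. w l ^ 2 / 2 + h l + r l) \<le> real (card L) * X"
    using sum_norm_le[of L "\<lambda>l. w l ^ 2 / 2 + h l + r l" "\<lambda>_. X"] by simp
  then have "norm \<alpha> / real (card L) * norm (\<Sum>l\<in>L. w l ^ 2 / 2 + h l + r l)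
      \<le> norm \<alpha> / real (card L) * (real (card L) * X)"
    by (rule mult_left_mono) simp
  then have first: "norm (\<alpha> / of_nat (card L) * (\<Sum>l\<in>L. w l ^ 2 / 2 + h l + r l)) \<le> norm \<alpha> * X"
    using L by (simp add: norm_mult norm_divide)
  have "norm (b l * (h l - h m + r l)) \<le> B * ((C + K) * \<kappa>^3)" for l
    unfolding norm_mult using b[of l] h(2)[of l] r[of l] norm_triangle_ineq[of "h l - h m" "r l"]
    by (intro mult_mono) (auto simp: algebra_simps intro: order_trans[OF norm_ge_zero b[of l]])
  then have "norm (\<Sum>l\<in>L. b l * (h l - h m + r l)) \<le> real (card L) * (B * ((C + K) * \<kappa>^3))"
    using sum_norm_le[of L "\<lambda>l. b l * (h l - h m + r l)" "\<lambda>_. B * ((C + K) * \<kappa>^3)"] by simp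
  then have second: "norm ((\<Sum>l\<in>L. b l * (h l - h m + r l)) / of_real \<kappa>) \<le> real (card L) * B * (C + K) * \<kappa>^2"
    using \<kappa> by (simp add: norm_divide divide_le_eq power2_eq_square power3_eq_cube mult_ac)
  have "(norm \<alpha> * (A^2 / 2 + C + K) + real (card L) * B * (C + K)) * \<kappa>^2
      = norm \<alpha> * X + real (card L) * B * (C + K) * \<kappa>^2"
    by (simp add: X_def algebra_simps)
  moreover have "(\<Sum>l\<in>L. (\<alpha> / of_nat (card L) + b l / of_real \<kappa>) * \<phi> l) - (\<alpha> + g)
      = \<alpha> / of_nat (card L) * (\<Sum>l\<in>L. w l ^ 2 / 2 + h l + r l) + (\<Sum>l\<in>L. b l * (h l - h m + r l)) / of_real \<kappa>"
    using L \<kappa> moments \<phi> by (intro sum_weighted_expansion_eq) simp_all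
  ultimately show ?thesis
    using norm_triangle_ineq[of "\<alpha> / of_nat (card L) * (\<Sum>l\<in>L. w l ^ 2 / 2 + h l + r l)"
        "(\<Sum>l\<in>L. b l * (h l - h m + r l)) / of_real \<kappa>"] first second
    by simp
qed

lemma plane_wave_phase_moments:
  fixes \<kappa> s X Y \<beta> \<gamma> :: real
  assumes p: "3 < p" and s: "s \<noteq> 0"
    and w_def: "w = (\<lambda>l. \<i> * of_real (\<kappa> * s * (cos (gpw_direction p l) * X + sin (gpw_direction p l) * Y)))"
    and b_def: "b = (\<lambda>l. - \<i> * of_real (2 / (s * real p) * (\<beta> * cos (gpw_direction p l) + \<gamma> * sin (gpw_direction p l))))"
  shows "(\<Sum>l\<in>{1..p}. w l) = 0" "(\<Sum>l\<in>{1..p}. b l) = 0"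
    "(\<Sum>l\<in>{1..p}. b l * w l) = of_real \<kappa> * of_real (\<beta> * X + \<gamma> * Y)"
    "(\<Sum>l\<in>{1..p}. b l * w l ^ 2) = 0"
proof -
  let ?u = "\<lambda>l. X * cos (gpw_direction p l) + Y * sin (gpw_direction p l)"
  let ?v = "\<lambda>l. \<beta> * cos (gpw_direction p l) + \<gamma> * sin (gpw_direction p l)"
  have w: "w l = \<i> * of_real (\<kappa> * s * ?u l)" for l
    by (simp add: w_def mult.commute)
  have b: "b l = - \<i> * of_real (2 / (s * real p) * ?v l)" for l
    by (simp add: b_def)
  show "(\<Sum>l\<in>{1..p}. w l) = 0"
    using sum_linear_form_gpw_direction[of p X Y] p
    by (simp only: w flip: sum_distrib_left of_real_sum) simp
  show "(\<Sum>l\<in>{1..p}. b l) = 0"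
    using sum_linear_form_gpw_direction[of p \<beta> \<gamma>] p
    by (simp only: b flip: sum_distrib_left of_real_sum) simp
  have "b l * w l = of_real (\<kappa> * s * (2 / (s * real p)) * (?v l * ?u l))" for l
    unfolding w b of_real_mult by (simp add: algebra_simps)
  then have "(\<Sum>l\<in>{1..p}. b l * w l) = of_real (\<kappa> * s * (2 / (s * real p)) * (\<Sum>l\<in>{1..p}. ?v l * ?u l))"
    by (simp only: flip: sum_distrib_left of_real_sum)
  also have "\<dots> = of_real (\<kappa> * s * (2 / (s * real p)) * (real p / 2 * (\<beta> * X + \<gamma> * Y)))"
    using p by (subst sum_linear_forms_mult_gpw_direction) auto
  also have "\<kappa> * s * (2 / (s * real p)) * (real p / 2 * (\<beta> * X + \<gamma> * Y)) = \<kappa> * (\<beta> * X + \<gamma> * Y)"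
    using p s by (simp add: field_simps)
  finally show "(\<Sum>l\<in>{1..p}. b l * w l) = of_real \<kappa> * of_real (\<beta> * X + \<gamma> * Y)"
    by simp
  have "b l * w l ^ 2 = \<i> * of_real ((\<kappa> * s)^2 * (2 / (s * real p)) * (?v l * ?u l * ?u l))" for l
    unfolding w b of_real_mult power2_eq_square by (simp add: algebra_simps)
  then have "(\<Sum>l\<in>{1..p}. b l * w l ^ 2) = \<i> * of_real ((\<kappa> * s)^2 * (2 / (s * real p)) * (\<Sum>l\<in>{1..p}. ?v l * ?u l * ?u l))"
    by (simp only: flip: sum_distrib_left of_real_sum)
  also have "\<dots> = 0"
    using sum_linear_forms_mult3_gpw_direction[of p \<beta> \<gamma> X Y X Y] p by simp
  finally show "(\<Sum>l\<in>{1..p}. b l * w l ^ 2) = 0" .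
qed

text \<open>The mean of the \<open>p\<close> waves reproduces \<open>\<alpha>\<close>; the \<open>1 / \<kappa>\<close>-weighted first moments of
  their phases reproduce \<open>\<beta> x + \<gamma> y\<close>.\<close>

definition gpw_fit_weight :: "real \<Rightarrow> real \<Rightarrow> nat \<Rightarrow> real \<Rightarrow> real \<Rightarrow> real \<Rightarrow> nat \<Rightarrow> complex" where
  "gpw_fit_weight \<kappa> s p \<alpha> \<beta> \<gamma> l = of_real \<alpha> / of_nat p
     + - \<i> * of_real (2 / (s * real p) * (\<beta> * cos (gpw_direction p l) + \<gamma> * sin (gpw_direction p l))) / of_real \<kappa>"

lemma norm_linear_minus_gpw_fit_le:
  fixes \<alpha> \<beta> \<gamma> :: real
  assumes s: "s = sqrt (d 0 0)" "0 < s" and p: "3 < p"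
    and \<kappa>: "0 < \<kappa>" "\<kappa> \<le> 1" "\<kappa> * (s + C) \<le> 1"
    and z: "\<bar>fst z - fst c\<bar> \<le> 1/2" "\<bar>snd z - snd c\<bar> \<le> 1/2"
    and remainder: "bounded_order2 \<kappa> C (\<lambda>\<theta>. gpw_phase_remainder \<kappa> d \<theta> q c z)"
  defines "R \<equiv> 3 * (s + C)^3 + s * C + C^2"
  shows "norm (of_real (\<alpha> + \<beta> * (fst z - fst c) + \<gamma> * (snd z - snd c))
             - (\<Sum>l\<in>{1..p}. gpw_fit_weight \<kappa> s p \<alpha> \<beta> \<gamma> l * gpw \<kappa> d (gpw_direction p l) q c z))
    \<le> (\<bar>\<alpha>\<bar> * (s^2 / 2 + C + R) + 2 * (C + R) / s * (\<bar>\<beta>\<bar> + \<bar>\<gamma>\<bar>)) * \<kappa>^2"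
proof -
  define X where "X = fst z - fst c"
  define Y where "Y = snd z - snd c"
  define b where "b = (\<lambda>l. - \<i> * of_real (2 / (s * real p) * (\<beta> * cos (gpw_direction p l) + \<gamma> * sin (gpw_direction p l))))"
  define w where "w = (\<lambda>l. \<i> * of_real (\<kappa> * s * (cos (gpw_direction p l) * X + sin (gpw_direction p l) * Y)))"
  define h where "h l = gpw_phase_remainder \<kappa> d (gpw_direction p l) q c z" for l
  define \<phi> where "\<phi> l = gpw \<kappa> d (gpw_direction p l) q c z" for l
  define r where "r l = \<phi> l - 1 - w l - w l ^ 2 / 2 - h l" for l
  have nb: "norm (b l) \<le> 2 / (s * real p) * (\<bar>\<beta>\<bar> + \<bar>\<gamma>\<bar>)" for l
    unfolding b_def norm_mult norm_minus_cancel norm_ii norm_of_real abs_mult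
    using s abs_linear_form_le[of \<beta> "gpw_direction p l" \<gamma>] by (simp add: divide_right_mono)
  have nw: "norm (w l) \<le> s * \<kappa>" for l
  proof -
    have "\<bar>X * cos (gpw_direction p l) + Y * sin (gpw_direction p l)\<bar> \<le> 1"
      using abs_linear_form_le[of X "gpw_direction p l" Y] z by (simp add: X_def Y_def)
    then show ?thesis
      unfolding w_def norm_mult norm_ii norm_of_real abs_mult
      using s \<kappa> by (simp add: mult_left_le mult.commute)
  qed
  have nh: "norm (h l) \<le> C * \<kappa>^2" "norm (h l - h 1) \<le> C * \<kappa>^3" for l
    using remainder by (simp_all add: h_def bounded_order2_def)
  have nr: "norm (r l) \<le> R * \<kappa>^3" for l
    using norm_exp_expansion_remainder_le[OF nw nh(1) \<kappa>]
    by (simp add: r_def \<phi>_def w_def h_def R_def X_def Y_def s gpw_eq_exp_plane_wave)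
  have weight: "gpw_fit_weight \<kappa> s p \<alpha> \<beta> \<gamma> l = of_real \<alpha> / of_nat (card {1..p}) + b l / of_real \<kappa>" for l
    by (simp add: gpw_fit_weight_def b_def)
  have "norm (of_real (\<alpha> + \<beta> * (fst z - fst c) + \<gamma> * (snd z - snd c))
             - (\<Sum>l\<in>{1..p}. gpw_fit_weight \<kappa> s p \<alpha> \<beta> \<gamma> l * gpw \<kappa> d (gpw_direction p l) q c z))
      = norm ((\<Sum>l\<in>{1..p}. (of_real \<alpha> / of_nat (card {1..p}) + b l / of_real \<kappa>) * \<phi> l)
          - (of_real \<alpha> + of_real (\<beta> * X + \<gamma> * Y)))"
    unfolding weight \<phi>_def X_def Y_def by (simp add: norm_minus_commute add.assoc)
  also have "\<dots> \<le> (\<bar>\<alpha>\<bar> * (s^2 / 2 + C + R) + real p * (2 / (s * real p) * (\<bar>\<beta>\<bar> + \<bar>\<gamma>\<bar>)) * (C + R)) * \<kappa>^2"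
    using norm_weighted_expansion_le[where L = "{1..p}" and w = w and h = h and r = r and b = b and m = 1
        and \<phi> = \<phi> and \<alpha> = "of_real \<alpha>",
        OF _ _ \<kappa>(1,2) plane_wave_phase_moments[OF p _ w_def b_def] _ nw nh nr nb] p s
    by (simp add: r_def)
  also have "real p * (2 / (s * real p) * (\<bar>\<beta>\<bar> + \<bar>\<gamma>\<bar>)) * (C + R) = 2 * (C + R) / s * (\<bar>\<beta>\<bar> + \<bar>\<gamma>\<bar>)"
    using p s by (simp add: field_simps)
  finally show ?thesis .
qed

lemma gpw_approximates_linear:
  assumes d00: "0 < d 0 0" and p: "3 < p"
  obtains K \<kappa>0 where "0 < \<kappa>0" "0 \<le> K"
    "\<And>\<kappa> \<alpha> \<beta> \<gamma> z. 0 < \<kappa> \<Longrightarrow> \<kappa> \<le> \<kappa>0 \<Longrightarrow> \<bar>fst z - fst c\<bar> \<le> 1/2 \<Longrightarrow> \<bar>snd z - snd c\<bar> \<le> 1/2 \<Longrightarrow>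
       norm (of_real (\<alpha> + \<beta> * (fst z - fst c) + \<gamma> * (snd z - snd c))
             - (\<Sum>l\<in>{1..p}. gpw_fit_weight \<kappa> (sqrt (d 0 0)) p \<alpha> \<beta> \<gamma> l * gpw \<kappa> d (gpw_direction p l) q c z))
         \<le> K * \<kappa>^2 * (\<bar>\<alpha>\<bar> + \<bar>\<beta>\<bar> + \<bar>\<gamma>\<bar>)"
proof -
  define s where "s = sqrt (d 0 0)"
  have s: "0 < s"
    using d00 by (simp add: s_def)
  obtain C where C: "\<And>\<kappa> z. 0 < \<kappa> \<Longrightarrow> \<kappa> \<le> 1 \<Longrightarrow> \<bar>fst z - fst c\<bar> \<le> 1 \<Longrightarrow> \<bar>snd z - snd c\<bar> \<le> 1 \<Longrightarrow>
      bounded_order2 \<kappa> C (\<lambda>\<theta>. gpw_phase_remainder \<kappa> d \<theta> q c z)"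
    using bounded_order2_gpw_phase_remainder[where d = d] d00 by (metis less_imp_le)
  have "norm (gpw_phase_remainder 1 d 0 q c c) \<le> C"
    using C[of 1 c] by (simp add: bounded_order2_def)
  then have "0 \<le> C"
    using norm_ge_zero order_trans by blast
  define R where "R = 3 * (s + C)^3 + s * C + C^2"
  define K where "K = (s^2 / 2 + C + R) + 2 * (C + R) / s"
  define \<kappa>0 where "\<kappa>0 = 1 / (s + C + 1)"
  have "0 \<le> R"
    using s \<open>0 \<le> C\<close> by (simp add: R_def)
  have "0 < \<kappa>0" "0 \<le> K"
    using s \<open>0 \<le> C\<close> \<open>0 \<le> R\<close> by (simp_all add: \<kappa>0_def K_def)
  moreover have "norm (of_real (\<alpha> + \<beta> * (fst z - fst c) + \<gamma> * (snd z - snd c))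
             - (\<Sum>l\<in>{1..p}. gpw_fit_weight \<kappa> s p \<alpha> \<beta> \<gamma> l * gpw \<kappa> d (gpw_direction p l) q c z))
         \<le> K * \<kappa>^2 * (\<bar>\<alpha>\<bar> + \<bar>\<beta>\<bar> + \<bar>\<gamma>\<bar>)"
    if \<kappa>: "0 < \<kappa>" "\<kappa> \<le> \<kappa>0" and z: "\<bar>fst z - fst c\<bar> \<le> 1/2" "\<bar>snd z - snd c\<bar> \<le> 1/2" for \<kappa> \<alpha> \<beta> \<gamma> z
  proof -
    have "\<kappa> * (s + C) + \<kappa> \<le> 1" "0 \<le> \<kappa> * (s + C)"
      using \<kappa> s \<open>0 \<le> C\<close> by (simp_all add: \<kappa>0_def field_simps)
    then have "\<kappa> \<le> 1" "\<kappa> * (s + C) \<le> 1"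
      using \<kappa> by linarith+
    moreover have "bounded_order2 \<kappa> C (\<lambda>\<theta>. gpw_phase_remainder \<kappa> d \<theta> q c z)"
      using C \<kappa> \<open>\<kappa> \<le> 1\<close> z by simp
    ultimately have "norm (of_real (\<alpha> + \<beta> * (fst z - fst c) + \<gamma> * (snd z - snd c))
             - (\<Sum>l\<in>{1..p}. gpw_fit_weight \<kappa> s p \<alpha> \<beta> \<gamma> l * gpw \<kappa> d (gpw_direction p l) q c z))
        \<le> (\<bar>\<alpha>\<bar> * (s^2 / 2 + C + R) + 2 * (C + R) / s * (\<bar>\<beta>\<bar> + \<bar>\<gamma>\<bar>)) * \<kappa>^2"
      using norm_linear_minus_gpw_fit_le[where d = d, OF s_def s p \<kappa>(1)] z unfolding R_def by blast
    also have "\<dots> \<le> K * \<kappa>^2 * (\<bar>\<alpha>\<bar> + \<bar>\<beta>\<bar> + \<bar>\<gamma>\<bar>)"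
    proof -
      have "x * A1 + A2 * y \<le> (A1 + A2) * (x + y)" if "0 \<le> A1" "0 \<le> A2" "0 \<le> x" "0 \<le> y" for A1 A2 x y :: real
        using mult_nonneg_nonneg[OF that(1,4)] mult_nonneg_nonneg[OF that(2,3)] by (simp add: algebra_simps)
      from this[of "s^2 / 2 + C + R" "2 * (C + R) / s" "\<bar>\<alpha>\<bar>" "\<bar>\<beta>\<bar> + \<bar>\<gamma>\<bar>"]
      have "\<bar>\<alpha>\<bar> * (s^2 / 2 + C + R) + 2 * (C + R) / s * (\<bar>\<beta>\<bar> + \<bar>\<gamma>\<bar>) \<le> K * (\<bar>\<alpha>\<bar> + \<bar>\<beta>\<bar> + \<bar>\<gamma>\<bar>)"
        using s \<open>0 \<le> C\<close> \<open>0 \<le> R\<close> by (simp add: K_def add.assoc)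
      from mult_right_mono[OF this zero_le_power2[of \<kappa>]] show ?thesis
        by (simp only: mult_ac)
    qed
    finally show ?thesis .
  qed
  ultimately show ?thesis
    using that unfolding s_def by blast
qed

section \<open>The \<open>L\<^sup>2\<close> estimate\<close>

lemma L2_norm_nonneg: "0 \<le> L2_norm K g"
proof -
  have "0 \<le> integral K (\<lambda>z. (cmod (g z))^2)"
    by (cases "(\<lambda>z. (cmod (g z))^2) integrable_on K") (auto intro: integral_nonneg simp: not_integrable_integral)
  then show ?thesis
    unfolding L2_norm_def by simp
qed

lemma L2_norm_Khat_le:
  assumes "\<And>z. z \<in> Khat \<Longrightarrow> norm (g z) \<le> B" "0 \<le> B"
  shows "L2_norm Khat g \<le> B"
proof -
  have "integral Khat (\<lambda>z. (cmod (g z))^2) \<le> B^2"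
  proof (cases "(\<lambda>z. (cmod (g z))^2) integrable_on Khat")
    case True
    have "integral Khat (\<lambda>z. (cmod (g z))^2) \<le> integral Khat (\<lambda>z. B^2)"
      using True assms by (intro integral_le) (auto simp: Khat_def intro: power_mono)
    also have "\<dots> = B^2"
      by (simp add: Khat_def content_Pair)
    finally show ?thesis .
  qed (simp add: not_integrable_integral)
  then show ?thesis
    unfolding L2_norm_def using assms(2) real_sqrt_le_mono by fastforce
qed

lemma integral_shifted_quadratic:
  "integral {0..1} (\<lambda>t::real. (A + B * (t - 1/2))^2 + C) = A^2 + B^2 / 12 + C"
proof -
  define F where "F t = A^2 * t + A * B * (t - 1/2)^2 + B^2 * (t - 1/2)^3 / 3 + C * t" for t :: real
  have "((\<lambda>t. (A + B * (t - 1/2))^2 + C) has_integral (F 1 - F 0)) {0..1}"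
  proof (rule fundamental_theorem_of_calculus)
    fix x :: real
    have "(F has_real_derivative ((A + B * (x - 1/2))^2 + C)) (at x within {0..1})"
      unfolding F_def
      by (rule derivative_eq_intros refl | simp)+ (simp add: power2_eq_square algebra_simps)
    then show "(F has_vector_derivative ((A + B * (x - 1/2))^2 + C)) (at x within {0..1})"
      by (simp add: has_real_derivative_iff_has_vector_derivative)
  qed simp
  moreover have "F 1 - F 0 = A^2 + B^2 / 12 + C"
    unfolding F_def by (simp add: power2_eq_square power3_eq_cube field_simps)
  ultimately show ?thesis
    by (simp add: integral_unique)
qed

lemma L2_norm_Khat_linear:
  "L2_norm Khat (\<lambda>z. of_real (\<alpha> + \<beta> * (fst z - 1/2) + \<gamma> * (snd z - 1/2)))
     = sqrt (\<alpha>^2 + \<beta>^2 / 12 + \<gamma>^2 / 12)"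
proof -
  define g where "g z = (\<alpha> + \<beta> * (fst z - 1/2) + \<gamma> * (snd z - 1/2))^2" for z :: "real \<times> real"
  have "continuous_on (cbox (0, 0) (1, 1)) g"
    unfolding g_def by (intro continuous_intros)
  then have "integral Khat g = integral (cbox 0 1) (\<lambda>x. integral (cbox 0 1) (\<lambda>y. g (x, y)))"
    unfolding Khat_def by (rule integral_prod_continuous)
  also have "\<dots> = integral {0..1} (\<lambda>x. (\<alpha> + \<beta> * (x - 1/2))^2 + \<gamma>^2 / 12)"
    using integral_shifted_quadratic[of "\<alpha> + \<beta> * (_ - 1/2)" \<gamma> 0] by (simp add: g_def)
  also have "\<dots> = \<alpha>^2 + \<beta>^2 / 12 + \<gamma>^2 / 12"
    by (rule integral_shifted_quadratic)
  finally show ?thesis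
    unfolding L2_norm_def g_def norm_of_real power2_abs by simp
qed

lemma L2_norm_Khat_linear_ge:
  "(\<bar>\<alpha>\<bar> + \<bar>\<beta>\<bar> + \<bar>\<gamma>\<bar>) / 6 \<le> L2_norm Khat (\<lambda>z. of_real (\<alpha> + \<beta> * (fst z - 1/2) + \<gamma> * (snd z - 1/2)))"
proof -
  have "(\<bar>\<alpha>\<bar> + \<bar>\<beta>\<bar> + \<bar>\<gamma>\<bar>)^2 \<le> 3 * \<alpha>^2 + 3 * \<beta>^2 + 3 * \<gamma>^2"
    using sum_squares_ge_zero[of "\<bar>\<alpha>\<bar> - \<bar>\<beta>\<bar>" "\<bar>\<beta>\<bar> - \<bar>\<gamma>\<bar>"] zero_le_power2[of "\<bar>\<alpha>\<bar> - \<bar>\<gamma>\<bar>"]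
    by (simp add: power2_eq_square algebra_simps)
  moreover have "((\<bar>\<alpha>\<bar> + \<bar>\<beta>\<bar> + \<bar>\<gamma>\<bar>) / 6)^2 = (\<bar>\<alpha>\<bar> + \<bar>\<beta>\<bar> + \<bar>\<gamma>\<bar>)^2 / 36"
    by (simp add: power_divide)
  moreover have "0 \<le> \<alpha>^2"
    by simp
  ultimately have "((\<bar>\<alpha>\<bar> + \<bar>\<beta>\<bar> + \<bar>\<gamma>\<bar>) / 6)^2 \<le> \<alpha>^2 + \<beta>^2 / 12 + \<gamma>^2 / 12"
    by linarith
  then show ?thesis
    unfolding L2_norm_Khat_linear by (rule real_le_rsqrt)
qed

lemma INF_L2_norm_le:
  assumes "v \<in> V"
  shows "(INF v\<in>V. L2_norm K (\<lambda>z. f z - v z)) \<le> L2_norm K (\<lambda>z. f z - v z)"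
  by (rule cINF_lower[OF bdd_belowI[of _ 0]]) (auto simp: L2_norm_nonneg assms)

lemma zero_in_gpw_space: "(\<lambda>_. 0) \<in> gpw_space \<kappa> d p q c"
  unfolding gpw_space_def by (intro CollectI exI[of _ "\<lambda>_. 0"]) simp

lemma P1_centroid_form:
  assumes "f \<in> P1"
  obtains \<alpha> \<beta> \<gamma> where "f = (\<lambda>z. of_real (\<alpha> + \<beta> * (fst z - 1/2) + \<gamma> * (snd z - 1/2)))"
proof -
  obtain a b c where "f = (\<lambda>z. of_real (a + b * fst z + c * snd z))"
    using assms unfolding P1_def by blast
  then have "f = (\<lambda>z. of_real ((a + b / 2 + c / 2) + b * (fst z - 1/2) + c * (snd z - 1/2)))"
    by (simp add: algebra_simps)
  then show ?thesis
    using that by blast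
qed

lemma gpw_space_approximates_P1:
  assumes "0 < d 0 0" "3 < p"
  obtains K \<kappa>0 where "0 < \<kappa>0"
    "\<And>\<kappa> f. 0 < \<kappa> \<Longrightarrow> \<kappa> \<le> \<kappa>0 \<Longrightarrow> f \<in> P1 \<Longrightarrow>
       \<exists>v\<in>gpw_space \<kappa> d p q centroid_Khat. L2_norm Khat (\<lambda>z. f z - v z) \<le> K * \<kappa>^2 * L2_norm Khat f"
proof -
  obtain K \<kappa>0 where \<kappa>0: "0 < \<kappa>0" and K: "0 \<le> K" and approx:
    "\<And>\<kappa> \<alpha> \<beta> \<gamma> z. 0 < \<kappa> \<Longrightarrow> \<kappa> \<le> \<kappa>0 \<Longrightarrow>
       \<bar>fst z - fst centroid_Khat\<bar> \<le> 1/2 \<Longrightarrow> \<bar>snd z - snd centroid_Khat\<bar> \<le> 1/2 \<Longrightarrow>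
       norm (of_real (\<alpha> + \<beta> * (fst z - fst centroid_Khat) + \<gamma> * (snd z - snd centroid_Khat))
             - (\<Sum>l\<in>{1..p}. gpw_fit_weight \<kappa> (sqrt (d 0 0)) p \<alpha> \<beta> \<gamma> l * gpw \<kappa> d (gpw_direction p l) q centroid_Khat z))
         \<le> K * \<kappa>^2 * (\<bar>\<alpha>\<bar> + \<bar>\<beta>\<bar> + \<bar>\<gamma>\<bar>)"
    by (rule gpw_approximates_linear[where d = d and c = centroid_Khat and q = q, OF assms]) blast
  have approx_P1: "\<exists>v\<in>gpw_space \<kappa> d p q centroid_Khat. L2_norm Khat (\<lambda>z. f z - v z) \<le> (6 * K) * \<kappa>^2 * L2_norm Khat f"
    if \<kappa>: "0 < \<kappa>" "\<kappa> \<le> \<kappa>0" and "f \<in> P1" for \<kappa> f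
  proof -
    obtain \<alpha> \<beta> \<gamma> where f: "f = (\<lambda>z. of_real (\<alpha> + \<beta> * (fst z - 1/2) + \<gamma> * (snd z - 1/2)))"
      using P1_centroid_form[OF \<open>f \<in> P1\<close>] .
    let ?v = "\<lambda>z. \<Sum>l\<in>{1..p}. gpw_fit_weight \<kappa> (sqrt (d 0 0)) p \<alpha> \<beta> \<gamma> l * gpw \<kappa> d (gpw_direction p l) q centroid_Khat z"
    have "?v \<in> gpw_space \<kappa> d p q centroid_Khat"
      unfolding gpw_space_def gpw_direction_def by blast
    moreover have "L2_norm Khat (\<lambda>z. f z - ?v z) \<le> K * \<kappa>^2 * (\<bar>\<alpha>\<bar> + \<bar>\<beta>\<bar> + \<bar>\<gamma>\<bar>)"
    proof (rule L2_norm_Khat_le)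
      fix z assume "z \<in> Khat"
      then have "\<bar>fst z - fst centroid_Khat\<bar> \<le> 1/2" "\<bar>snd z - snd centroid_Khat\<bar> \<le> 1/2"
        by (auto simp: Khat_def centroid_Khat_def cbox_Pair_eq abs_if)
      from approx[OF \<kappa> this] show "norm (f z - ?v z) \<le> K * \<kappa>^2 * (\<bar>\<alpha>\<bar> + \<bar>\<beta>\<bar> + \<bar>\<gamma>\<bar>)"
        unfolding f by (simp add: centroid_Khat_def)
    qed (use K in simp)
    moreover have "\<bar>\<alpha>\<bar> + \<bar>\<beta>\<bar> + \<bar>\<gamma>\<bar> \<le> 6 * L2_norm Khat f"
      using L2_norm_Khat_linear_ge[of \<alpha> \<beta> \<gamma>] unfolding f by simp
    from mult_left_mono[OF this, of "K * \<kappa>^2"]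
    have "K * \<kappa>^2 * (\<bar>\<alpha>\<bar> + \<bar>\<beta>\<bar> + \<bar>\<gamma>\<bar>) \<le> (6 * K) * \<kappa>^2 * L2_norm Khat f"
      using K by (simp add: mult_ac)
    ultimately show ?thesis
      by (meson order_trans)
  qed
  show ?thesis
    by (rule that[OF \<kappa>0 approx_P1])
qed

lemma le_uniform_quadratic_bound:
  fixes X K L e \<kappa> \<kappa>0 :: real
  assumes "0 < \<kappa>0" "0 < e" "0 < \<kappa>" "0 \<le> L"
    and small: "\<kappa> \<le> \<kappa>0 \<Longrightarrow> X \<le> K * \<kappa>^2 * L" and large: "X \<le> L"
  shows "X \<le> max (K / e) (1 / (\<kappa>0^2 * e)) * \<kappa>^2 * e * L"
proof (cases "\<kappa> \<le> \<kappa>0")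
  case True
  have "K * \<kappa>^2 * L = (K / e) * \<kappa>^2 * e * L"
    using assms(2) by simp
  also have "\<dots> \<le> max (K / e) (1 / (\<kappa>0^2 * e)) * \<kappa>^2 * e * L"
    using assms(2,4) by (intro mult_right_mono) auto
  finally show ?thesis
    using small[OF True] by linarith
next
  case False
  then have "\<kappa>0^2 \<le> \<kappa>^2"
    using assms(1) by (intro power_mono) auto
  then have "1 \<le> (1 / (\<kappa>0^2 * e)) * \<kappa>^2 * e"
    using assms(1,2) by (simp add: field_simps)
  also have "\<dots> \<le> max (K / e) (1 / (\<kappa>0^2 * e)) * \<kappa>^2 * e"
    using assms(2) by (intro mult_right_mono) auto
  finally have "1 \<le> max (K / e) (1 / (\<kappa>0^2 * e)) * \<kappa>^2 * e" .
  from mult_right_mono[OF this assms(4)] show ?thesis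
    using large by simp
qed

theorem lemma2:
  fixes \<epsilon> :: "real \<times> real \<Rightarrow> real"
    and D :: "nat \<Rightarrow> nat \<Rightarrow> real \<times> real \<Rightarrow> real"
    and n p q :: nat
  assumes smooth: "smooth_family Khat \<epsilon> D"
    and pos: "\<forall>z\<in>Khat. \<epsilon> z > 0"
    and n: "n \<ge> 2" and p: "p = 2 * n + 1" and q: "q \<ge> n + 1"
  shows "\<exists>C. \<forall>\<kappa>>0. \<forall>f\<in>P1.
           (INF v\<in>gpw_space \<kappa> (\<lambda>i j. D i j centroid_Khat) p q centroid_Khat. L2_norm Khat (\<lambda>z. f z - v z))
             \<le> C * \<kappa>^2 * \<bar>\<epsilon> centroid_Khat\<bar> * L2_norm Khat f"
proof -
  let ?e = "\<epsilon> centroid_Khat"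
  have "centroid_Khat \<in> Khat"
    by (simp add: Khat_def centroid_Khat_def cbox_Pair_eq)
  then have e: "0 < ?e" and d00: "D 0 0 centroid_Khat = ?e"
    using pos smooth by (auto simp: smooth_family_def)
  have "0 < D 0 0 centroid_Khat" "3 < p"
    using e d00 n p by simp_all
  then obtain K \<kappa>0 where \<kappa>0: "0 < \<kappa>0" and approx: "\<And>\<kappa> f. 0 < \<kappa> \<Longrightarrow> \<kappa> \<le> \<kappa>0 \<Longrightarrow> f \<in> P1 \<Longrightarrow>
      \<exists>v\<in>gpw_space \<kappa> (\<lambda>i j. D i j centroid_Khat) p q centroid_Khat. L2_norm Khat (\<lambda>z. f z - v z) \<le> K * \<kappa>^2 * L2_norm Khat f"
    by (rule gpw_space_approximates_P1[where d = "\<lambda>i j. D i j centroid_Khat"]) blast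
  show ?thesis
  proof (intro exI[of _ "max (K / ?e) (1 / (\<kappa>0^2 * ?e))"] allI impI ballI)
    fix \<kappa> :: real and f assume \<kappa>: "0 < \<kappa>" and f: "f \<in> P1"
    let ?G = "gpw_space \<kappa> (\<lambda>i j. D i j centroid_Khat) p q centroid_Khat"
    have "(INF v\<in>?G. L2_norm Khat (\<lambda>z. f z - v z)) \<le> K * \<kappa>^2 * L2_norm Khat f" if "\<kappa> \<le> \<kappa>0"
      using approx[OF \<kappa> that f] INF_L2_norm_le order_trans by blast
    moreover have "(INF v\<in>?G. L2_norm Khat (\<lambda>z. f z - v z)) \<le> L2_norm Khat f"
      using INF_L2_norm_le[OF zero_in_gpw_space] by simp
    ultimately show "(INF v\<in>?G. L2_norm Khat (\<lambda>z. f z - v z))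
        \<le> max (K / ?e) (1 / (\<kappa>0^2 * ?e)) * \<kappa>^2 * \<bar>?e\<bar> * L2_norm Khat f"
      using le_uniform_quadratic_bound[OF \<kappa>0 e \<kappa> L2_norm_nonneg] e by simp
  qed
qed

end
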